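(* Let $\mathbf{R}=(\mathbf{R}^{\Rightarrow},\mathbf{R}^{\mathrm{o}})$ with $\mathbf{R}^{\Rightarrow}=\emptyset$, let $M$ be an $\mathbf{R}$-ordered model, $w$ a world of $M$, and $A,B$ Boolean formulas. Then $w\models\bigcirc(B/A)$ iff there exists a world $v$ with $v\models A\wedge B$ such that for every world $u$ with $u\succeq_I v$, $u\models A\rightarrow B$.
   Context: $\mathbf{R}^{\mathrm{o}}$ is a finite set of obligations $\bigcirc(B/A)$ ($A,B$ Boolean; body $b=A$, head $h=B$). An $\mathbf{R}$-ordered model is $M=(W,\succeq_N,\succeq_I,v)$ with $W\neq\emptyset$ and valuation $v$; since $\mathbf{R}^{\Rightarrow}=\emptyset$, all worlds falsify no normality conditional and $\succeq_N=W\times W$. The ideality ordering is $w_1\succeq_I w_2$ iff $V(w_1)\subseteq V(w_2)$, where $V(w)=\{r_i\in\mathbf{R}^{\mathrm{o}}:w\models b(r_i)\wedge\neg h(r_i)$ and $w\not\models b(r_j)$ for all $r_j\in\mathbf{R}^{\mathrm{o}}$ with $r_j\triangleright r_i\}$, for a fixed overriding relation $\triangleright$ on $\mathbf{R}^{\mathrm{o}}$. $\Vert A\Vert$ = worlds where $A$ holds; $\max_{\succeq_N}(X)=\{w\in X:\forall u\in X(u\succeq_N w\Rightarrow w\succeq_N u)\}$. Lifting: $U\succeq_I^{s}U'$ iff for every $u'\in U'$ there is $u\in U$ with $u\succeq_I u'$. Truth: $w\models\bigcirc(B/A)$ iff $\max_{\succeq_N}(\Vert A\wedge\neg B\Vert)\not\succeq_I^{s}\max_{\succeq_N}(\Vert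 A\wedge B\Vert)$. *)

theory Defs
  imports Main
begin

datatype 'a form = Atom 'a | FTrue | FFalse | Neg "'a form" | Conj "'a form" "'a form"
  | Disj "'a form" "'a form" | Impl "'a form" "'a form"

fun sat :: "('w \<Rightarrow> 'a \<Rightarrow> bool) \<Rightarrow> 'w \<Rightarrow> 'a form \<Rightarrow> bool" where
  "sat v w (Atom p) = v w p"
| "sat v w FTrue = True"
| "sat v w FFalse = False"
| "sat v w (Neg A) = (\<not> sat v w A)"
| "sat v w (Conj A B) = (sat v w A \<and> sat v w B)"
| "sat v w (Disj A B) = (sat v w A \<or> sat v w B)"
| "sat v w (Impl A B) = (sat v w A \<longrightarrow> sat v w B)"

text \<open>An obligation O(B/A) is represented as the pair (A, B): body = fst, head = snd.\<close>
type_synonym 'a obl = "'a form \<times> 'a form"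

definition body :: "'a obl \<Rightarrow> 'a form" where "body r = fst r"
definition head :: "'a obl \<Rightarrow> 'a form" where "head r = snd r"

definition ext :: "'w set \<Rightarrow> ('w \<Rightarrow> 'a \<Rightarrow> bool) \<Rightarrow> 'a form \<Rightarrow> 'w set" where
  "ext W v A = {w \<in> W. sat v w A}"

text \<open>Normality ordering: since R\<Rightarrow> is empty, it is W \<times> W.\<close>
definition geN :: "'w set \<Rightarrow> 'w \<Rightarrow> 'w \<Rightarrow> bool" where
  "geN W w1 w2 \<longleftrightarrow> (w1, w2) \<in> W \<times> W"

text \<open>V(w): obligations violated at w and not overridden (ov r' r means r' overrides r).\<close>
definition viol :: "'a obl set \<Rightarrow> ('a obl \<Rightarrow> 'a obl \<Rightarrow> bool) \<Rightarrow> ('w \<Rightarrow> 'a \<Rightarrow> bool)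
    \<Rightarrow> 'w \<Rightarrow> 'a obl set" where
  "viol Ro ov v w = {r \<in> Ro. sat v w (body r) \<and> \<not> sat v w (head r) \<and>
     (\<forall>r' \<in> Ro. ov r' r \<longrightarrow> \<not> sat v w (body r'))}"

definition geI :: "'a obl set \<Rightarrow> ('a obl \<Rightarrow> 'a obl \<Rightarrow> bool) \<Rightarrow> ('w \<Rightarrow> 'a \<Rightarrow> bool)
    \<Rightarrow> 'w \<Rightarrow> 'w \<Rightarrow> bool" where
  "geI Ro ov v w1 w2 \<longleftrightarrow> viol Ro ov v w1 \<subseteq> viol Ro ov v w2"

definition maxs :: "('w \<Rightarrow> 'w \<Rightarrow> bool) \<Rightarrow> 'w set \<Rightarrow> 'w set" where
  "maxs ge X = {w \<in> X. \<forall>u \<in> X. ge u w \<longrightarrow> ge w u}"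

definition lift :: "('w \<Rightarrow> 'w \<Rightarrow> bool) \<Rightarrow> 'w set \<Rightarrow> 'w set \<Rightarrow> bool" where
  "lift ge U U' \<longleftrightarrow> (\<forall>u' \<in> U'. \<exists>u \<in> U. ge u u')"

definition obl_true :: "'w set \<Rightarrow> ('w \<Rightarrow> 'a \<Rightarrow> bool) \<Rightarrow> 'a obl set
    \<Rightarrow> ('a obl \<Rightarrow> 'a obl \<Rightarrow> bool) \<Rightarrow> 'w \<Rightarrow> 'a form \<Rightarrow> 'a form \<Rightarrow> bool" where
  "obl_true W v Ro ov w A B \<longleftrightarrow>
     \<not> lift (geI Ro ov v) (maxs (geN W) (ext W v (Conj A (Neg B))))
                          (maxs (geN W) (ext W v (Conj A B)))"

end

theory Submission
  imports Defs
begin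

text \<open>Since the normality ordering is total, the maximal worlds of an extension are all of
its worlds. The lifted ideality comparison therefore fails exactly when some \<open>A \<and> B\<close>-world
is not dominated by any \<open>A \<and> \<not>B\<close>-world, i.e. when every world at least as ideal as it
satisfies \<open>A \<rightarrow> B\<close>.\<close>

lemma maxs_geN: "X \<subseteq> W \<Longrightarrow> maxs (geN W) X = X"
  unfolding maxs_def geN_def by auto

lemma maxs_geN_ext: "maxs (geN W) (ext W v A) = ext W v A"
  by (rule maxs_geN) (auto simp: ext_def)

lemma not_lift_iff: "\<not> lift ge U U' \<longleftrightarrow> (\<exists>u'\<in>U'. \<forall>u\<in>U. \<not> ge u u')"
  unfolding lift_def by blast

lemma obl_true_iff_ext:
  "obl_true W v Ro ov w A B \<longleftrightarrow>
    (\<exists>x \<in> ext W v (Conj A B). \<forall>u \<in> ext W v (Conj A (Neg B)). \<not> geI Ro ov v u x)"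
  unfolding obl_true_def maxs_geN_ext not_lift_iff ..

theorem proposition4:
  fixes W :: "'w set" and v :: "'w \<Rightarrow> 'a \<Rightarrow> bool"
    and Ro :: "'a obl set" and ov :: "'a obl \<Rightarrow> 'a obl \<Rightarrow> bool"
    and w :: 'w and A B :: "'a form"
  assumes "W \<noteq> {}" and "finite Ro" and "w \<in> W"
  shows "obl_true W v Ro ov w A B \<longleftrightarrow>
    (\<exists>x \<in> W. sat v x (Conj A B) \<and>
       (\<forall>u \<in> W. geI Ro ov v u x \<longrightarrow> sat v u (Impl A B)))"
  unfolding obl_true_iff_ext ext_def by auto

end
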